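(* Let $\mathsf E$ be a small preadditive category and $R=R_{\mathsf E}$ the associated ring. Then the category of c-unital left $R$-modules is naturally equivalent to the category of left $\mathsf E$-modules. The equivalence assigns to a left $\mathsf E$-module $\mathsf P$ the c-unital left $R$-module $P=\prod_{x\in\mathsf E}\mathsf P(x)$, with the action of $R$ on $P$ induced by the action of $\mathsf E$ on $\mathsf P$.
   Context: A small preadditive category is a small category enriched in abelian groups. Its associated ring is $R_{\mathsf E}=\bigoplus_{x,y\in\mathsf E}\mathrm{Hom}_{\mathsf E}(x,y)$, with multiplication given by composition of composable morphisms and zero product for noncomposable ones (a nonunital associative ring when $\mathsf E$ has infinitely many objects). A left $\mathsf E$-module is an additive covariant functor $\mathsf E\to\mathsf{Ab}$. Modules over $R$ are not assumed unital; a left $R$-module $P$ is c-unital if the natural map $P\to\mathrm{Hom}_R(R,P)$, $p\mapsto(r\mapsto rp)$, is an isomorphism. *)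

theory Defs
  imports "HOL-Algebra.Ring"
begin

text \<open>Objects are the elements of the type 'o
  (a set, hence small). H x y is the abelian group Hom(x,y) (only the carrier,
  addition and zero of the record are used). cmp x y z g f is the composite
  g o f of f : x -> y and g : y -> z; idn x is the identity of x.\<close>

definition preadditive_cat ::
  "('o \<Rightarrow> 'o \<Rightarrow> 'm ring) \<Rightarrow> ('o \<Rightarrow> 'o \<Rightarrow> 'o \<Rightarrow> 'm \<Rightarrow> 'm \<Rightarrow> 'm) \<Rightarrow> ('o \<Rightarrow> 'm) \<Rightarrow> bool" where
  "preadditive_cat H cmp idn \<longleftrightarrow>
     (\<forall>x y. abelian_group (H x y)) \<and>
     (\<forall>x. idn x \<in> carrier (H x x)) \<and>
     (\<forall>x y z f g. f \<in> carrier (H x y) \<longrightarrow> g \<in> carrier (H y z) \<longrightarrow>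
        cmp x y z g f \<in> carrier (H x z)) \<and>
     (\<forall>x y f. f \<in> carrier (H x y) \<longrightarrow> cmp x y y (idn y) f = f \<and> cmp x x y f (idn x) = f) \<and>
     (\<forall>w x y z f g h. f \<in> carrier (H w x) \<longrightarrow> g \<in> carrier (H x y) \<longrightarrow> h \<in> carrier (H y z) \<longrightarrow>
        cmp w y z h (cmp w x y g f) = cmp w x z (cmp x y z h g) f) \<and>
     (\<forall>x y z f g g'. f \<in> carrier (H x y) \<longrightarrow> g \<in> carrier (H y z) \<longrightarrow> g' \<in> carrier (H y z) \<longrightarrow>
        cmp x y z (g \<oplus>\<^bsub>H y z\<^esub> g') f = cmp x y z g f \<oplus>\<^bsub>H x z\<^esub> cmp x y z g' f) \<and>
     (\<forall>x y z f f' g. f \<in> carrier (H x y) \<longrightarrow> f' \<in> carrier (H x y) \<longrightarrow> g \<in> carrier (H y z) \<longrightarrow>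
        cmp x y z g (f \<oplus>\<^bsub>H x y\<^esub> f') = cmp x y z g f \<oplus>\<^bsub>H x z\<^esub> cmp x y z g f')"

text \<open>The ring R_E = direct sum of all Hom(x,y): an element r has component
  r x y in Hom(x,y), with finitely many nonzero components.\<close>

definition R_carrier :: "('o \<Rightarrow> 'o \<Rightarrow> 'm ring) \<Rightarrow> ('o \<Rightarrow> 'o \<Rightarrow> 'm) set" where
  "R_carrier H = {r. (\<forall>x y. r x y \<in> carrier (H x y)) \<and>
                     finite {(x, y). r x y \<noteq> \<zero>\<^bsub>H x y\<^esub>}}"

definition R_zero :: "('o \<Rightarrow> 'o \<Rightarrow> 'm ring) \<Rightarrow> 'o \<Rightarrow> 'o \<Rightarrow> 'm" where
  "R_zero H = (\<lambda>x y. \<zero>\<^bsub>H x y\<^esub>)"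

definition R_add :: "('o \<Rightarrow> 'o \<Rightarrow> 'm ring) \<Rightarrow> ('o \<Rightarrow> 'o \<Rightarrow> 'm) \<Rightarrow> ('o \<Rightarrow> 'o \<Rightarrow> 'm) \<Rightarrow> 'o \<Rightarrow> 'o \<Rightarrow> 'm" where
  "R_add H r s = (\<lambda>x y. r x y \<oplus>\<^bsub>H x y\<^esub> s x y)"

definition R_mult ::
  "('o \<Rightarrow> 'o \<Rightarrow> 'm ring) \<Rightarrow> ('o \<Rightarrow> 'o \<Rightarrow> 'o \<Rightarrow> 'm \<Rightarrow> 'm \<Rightarrow> 'm) \<Rightarrow>
   ('o \<Rightarrow> 'o \<Rightarrow> 'm) \<Rightarrow> ('o \<Rightarrow> 'o \<Rightarrow> 'm) \<Rightarrow> 'o \<Rightarrow> 'o \<Rightarrow> 'm" where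
  "R_mult H cmp r s = (\<lambda>x z. finsum (H x z) (\<lambda>y. cmp x y z (r y z) (s x y))
        {y. s x y \<noteq> \<zero>\<^bsub>H x y\<^esub> \<and> r y z \<noteq> \<zero>\<^bsub>H y z\<^esub>})"

definition R_self :: "('o \<Rightarrow> 'o \<Rightarrow> 'm ring) \<Rightarrow> ('o \<Rightarrow> 'o \<Rightarrow> 'o \<Rightarrow> 'm \<Rightarrow> 'm \<Rightarrow> 'm) \<Rightarrow> ('o \<Rightarrow> 'o \<Rightarrow> 'm) ring" where
  "R_self H cmp = \<lparr>carrier = R_carrier H, mult = R_mult H cmp, one = undefined,
                   zero = R_zero H, add = R_add H\<rparr>"

text \<open>A (not necessarily unital) left R-module: an abelian group M
  (carrier, add, zero of the record) with an action act.\<close>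
definition R_module ::
  "('o \<Rightarrow> 'o \<Rightarrow> 'm ring) \<Rightarrow> ('o \<Rightarrow> 'o \<Rightarrow> 'o \<Rightarrow> 'm \<Rightarrow> 'm \<Rightarrow> 'm) \<Rightarrow>
   'p ring \<Rightarrow> (('o \<Rightarrow> 'o \<Rightarrow> 'm) \<Rightarrow> 'p \<Rightarrow> 'p) \<Rightarrow> bool" where
  "R_module H cmp M act \<longleftrightarrow> abelian_group M \<and>
     (\<forall>r\<in>R_carrier H. \<forall>p\<in>carrier M. act r p \<in> carrier M) \<and>
     (\<forall>r\<in>R_carrier H. \<forall>p\<in>carrier M. \<forall>q\<in>carrier M.
        act r (p \<oplus>\<^bsub>M\<^esub> q) = act r p \<oplus>\<^bsub>M\<^esub> act r q) \<and>
     (\<forall>r\<in>R_carrier H. \<forall>s\<in>R_carrier H. \<forall>p\<in>carrier M.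
        act (R_add H r s) p = act r p \<oplus>\<^bsub>M\<^esub> act s p) \<and>
     (\<forall>r\<in>R_carrier H. \<forall>s\<in>R_carrier H. \<forall>p\<in>carrier M.
        act (R_mult H cmp r s) p = act r (act s p))"

definition R_hom ::
  "('o \<Rightarrow> 'o \<Rightarrow> 'm ring) \<Rightarrow> 'p ring \<Rightarrow> (('o \<Rightarrow> 'o \<Rightarrow> 'm) \<Rightarrow> 'p \<Rightarrow> 'p) \<Rightarrow>
   'q ring \<Rightarrow> (('o \<Rightarrow> 'o \<Rightarrow> 'm) \<Rightarrow> 'q \<Rightarrow> 'q) \<Rightarrow> ('p \<Rightarrow> 'q) set" where
  "R_hom H M act N act' = {\<phi>. \<phi> \<in> carrier M \<rightarrow>\<^sub>E carrier N \<and>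
     (\<forall>p\<in>carrier M. \<forall>q\<in>carrier M. \<phi> (p \<oplus>\<^bsub>M\<^esub> q) = \<phi> p \<oplus>\<^bsub>N\<^esub> \<phi> q) \<and>
     (\<forall>r\<in>R_carrier H. \<forall>p\<in>carrier M. \<phi> (act r p) = act' r (\<phi> p))}"

definition c_unital ::
  "('o \<Rightarrow> 'o \<Rightarrow> 'm ring) \<Rightarrow> ('o \<Rightarrow> 'o \<Rightarrow> 'o \<Rightarrow> 'm \<Rightarrow> 'm \<Rightarrow> 'm) \<Rightarrow>
   'p ring \<Rightarrow> (('o \<Rightarrow> 'o \<Rightarrow> 'm) \<Rightarrow> 'p \<Rightarrow> 'p) \<Rightarrow> bool" where
  "c_unital H cmp M act \<longleftrightarrow>
     bij_betw (\<lambda>p. \<lambda>r\<in>R_carrier H. act r p) (carrier M)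
              (R_hom H (R_self H cmp) (R_mult H cmp) M act)"

text \<open>A left E-module: an additive covariant functor E -> Ab. PM x is the
  abelian group P(x); pact x y f is P(f) : P(x) -> P(y) for f : x -> y.\<close>
definition E_module ::
  "('o \<Rightarrow> 'o \<Rightarrow> 'm ring) \<Rightarrow> ('o \<Rightarrow> 'o \<Rightarrow> 'o \<Rightarrow> 'm \<Rightarrow> 'm \<Rightarrow> 'm) \<Rightarrow> ('o \<Rightarrow> 'm) \<Rightarrow>
   ('o \<Rightarrow> 'v ring) \<Rightarrow> ('o \<Rightarrow> 'o \<Rightarrow> 'm \<Rightarrow> 'v \<Rightarrow> 'v) \<Rightarrow> bool" where
  "E_module H cmp idn PM pact \<longleftrightarrow>
     (\<forall>x. abelian_group (PM x)) \<and>
     (\<forall>x y f v. f \<in> carrier (H x y) \<longrightarrow> v \<in> carrier (PM x) \<longrightarrow> pact x y f v \<in> carrier (PM y)) \<and>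
     (\<forall>x y f v w. f \<in> carrier (H x y) \<longrightarrow> v \<in> carrier (PM x) \<longrightarrow> w \<in> carrier (PM x) \<longrightarrow>
        pact x y f (v \<oplus>\<^bsub>PM x\<^esub> w) = pact x y f v \<oplus>\<^bsub>PM y\<^esub> pact x y f w) \<and>
     (\<forall>x y f f' v. f \<in> carrier (H x y) \<longrightarrow> f' \<in> carrier (H x y) \<longrightarrow> v \<in> carrier (PM x) \<longrightarrow>
        pact x y (f \<oplus>\<^bsub>H x y\<^esub> f') v = pact x y f v \<oplus>\<^bsub>PM y\<^esub> pact x y f' v) \<and>
     (\<forall>x v. v \<in> carrier (PM x) \<longrightarrow> pact x x (idn x) v = v) \<and>
     (\<forall>x y z f g v. f \<in> carrier (H x y) \<longrightarrow> g \<in> carrier (H y z) \<longrightarrow> v \<in> carrier (PM x) \<longrightarrow>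
        pact x z (cmp x y z g f) v = pact y z g (pact x y f v))"

definition E_hom ::
  "('o \<Rightarrow> 'o \<Rightarrow> 'm ring) \<Rightarrow> ('o \<Rightarrow> 'v ring) \<Rightarrow> ('o \<Rightarrow> 'o \<Rightarrow> 'm \<Rightarrow> 'v \<Rightarrow> 'v) \<Rightarrow>
   ('o \<Rightarrow> 'w ring) \<Rightarrow> ('o \<Rightarrow> 'o \<Rightarrow> 'm \<Rightarrow> 'w \<Rightarrow> 'w) \<Rightarrow> ('o \<Rightarrow> 'v \<Rightarrow> 'w) set" where
  "E_hom H PM pact QM qact = {\<eta>.
     (\<forall>x. \<eta> x \<in> carrier (PM x) \<rightarrow>\<^sub>E carrier (QM x)) \<and>
     (\<forall>x. \<forall>v\<in>carrier (PM x). \<forall>w\<in>carrier (PM x).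
        \<eta> x (v \<oplus>\<^bsub>PM x\<^esub> w) = \<eta> x v \<oplus>\<^bsub>QM x\<^esub> \<eta> x w) \<and>
     (\<forall>x y f v. f \<in> carrier (H x y) \<longrightarrow> v \<in> carrier (PM x) \<longrightarrow>
        \<eta> y (pact x y f v) = qact x y f (\<eta> x v))}"

text \<open>The functor E-modules -> c-unital R-modules: P \<mapsto> prod_x P(x).\<close>
definition hat_carrier :: "('o \<Rightarrow> 'v ring) \<Rightarrow> ('o \<Rightarrow> 'v) set" where
  "hat_carrier PM = {u. \<forall>x. u x \<in> carrier (PM x)}"

definition hat_module :: "('o \<Rightarrow> 'v ring) \<Rightarrow> ('o \<Rightarrow> 'v) ring" where
  "hat_module PM = \<lparr>carrier = hat_carrier PM, mult = undefined, one = undefined,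
                    zero = (\<lambda>x. \<zero>\<^bsub>PM x\<^esub>), add = (\<lambda>u v x. u x \<oplus>\<^bsub>PM x\<^esub> v x)\<rparr>"

definition hat_act ::
  "('o \<Rightarrow> 'o \<Rightarrow> 'm ring) \<Rightarrow> ('o \<Rightarrow> 'v ring) \<Rightarrow> ('o \<Rightarrow> 'o \<Rightarrow> 'm \<Rightarrow> 'v \<Rightarrow> 'v) \<Rightarrow>
   ('o \<Rightarrow> 'o \<Rightarrow> 'm) \<Rightarrow> ('o \<Rightarrow> 'v) \<Rightarrow> ('o \<Rightarrow> 'v)" where
  "hat_act H PM pact r u = (\<lambda>y. finsum (PM y) (\<lambda>x. pact x y (r x y) (u x))
                                    {x. r x y \<noteq> \<zero>\<^bsub>H x y\<^esub>})"

definition hat_hom :: "('o \<Rightarrow> 'v ring) \<Rightarrow> ('o \<Rightarrow> 'v \<Rightarrow> 'w) \<Rightarrow> ('o \<Rightarrow> 'v) \<Rightarrow> ('o \<Rightarrow> 'w)" where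
  "hat_hom PM \<eta> = (\<lambda>u\<in>hat_carrier PM. \<lambda>x. \<eta> x (u x))"

end

theory Submission
  imports Defs
begin

text \<open>The identities \<open>e\<^sub>x = id\<^sub>x\<close>, placed at position \<open>(x, x)\<close>, form a system of local units
  of \<open>R\<close>: a morphism \<open>f : x \<rightarrow> y\<close> placed at \<open>(x, y)\<close> satisfies \<open>f e\<^sub>x = f = e\<^sub>y f\<close>, and such
  single-position elements span \<open>R\<close> additively, so \<open>R\<close>-linear identities need only be checked
  on them. On \<open>P = \<Prod>\<^sub>x P(x)\<close> the element \<open>e\<^sub>x\<close> acts as the projection onto \<open>P(x)\<close>; this makes
  \<open>P\<close> c-unital, and an \<open>R\<close>-linear map of such products is determined by, and determines, its
  restrictions to the factors, i.e. a natural transformation. Conversely, a c-unital module \<open>M\<close>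
  is the product of the \<open>e\<^sub>x M\<close>: the map \<open>m \<mapsto> (e\<^sub>x m)\<^sub>x\<close> is injective because \<open>f m = f (e\<^sub>x m)\<close>,
  and a family \<open>(u\<^sub>x)\<close> is attained by the element representing the \<open>R\<close>-linear map
  \<open>r \<mapsto> \<Sum>\<^sub>x r u\<^sub>x\<close>.\<close>

lemma (in abelian_group) idem_imp_zero:
  assumes "a \<in> carrier G" "a \<oplus> a = a"
  shows "a = \<zero>"
  using assms add.l_cancel_one by blast

lemma abelian_group_additive_image:
  fixes G :: "('a, 'b) ring_scheme" (structure)
  assumes G: "abelian_group G" and g: "g \<in> carrier G \<rightarrow> carrier G"
    and additive: "\<And>a b. a \<in> carrier G \<Longrightarrow> b \<in> carrier G \<Longrightarrow> g (a \<oplus>\<^bsub>G\<^esub> b) = g a \<oplus>\<^bsub>G\<^esub> g b"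
  shows "abelian_group (G\<lparr>carrier := g ` carrier G\<rparr>)"
proof -
  interpret abelian_group G
    by (fact G)
  have g_zero: "g \<zero> = \<zero>"
    using g additive[of \<zero> \<zero>] by (intro idem_imp_zero) auto
  let ?I = "G\<lparr>carrier := g ` carrier G\<rparr>"
  show ?thesis
  proof (rule abelian_groupI)
    fix u v w
    assume "u \<in> carrier ?I" "v \<in> carrier ?I" "w \<in> carrier ?I"
    then obtain a b c where abc: "a \<in> carrier G" "b \<in> carrier G" "c \<in> carrier G"
      and uvw: "u = g a" "v = g b" "w = g c"
      by auto
    then have "u \<in> carrier G" "v \<in> carrier G" "w \<in> carrier G"
      using g by auto
    then show "u \<oplus>\<^bsub>?I\<^esub> v \<oplus>\<^bsub>?I\<^esub> w = u \<oplus>\<^bsub>?I\<^esub> (v \<oplus>\<^bsub>?I\<^esub> w)"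
      by (simp add: a_assoc)
    show "u \<oplus>\<^bsub>?I\<^esub> v = v \<oplus>\<^bsub>?I\<^esub> u"
      using \<open>u \<in> carrier G\<close> \<open>v \<in> carrier G\<close> by (simp add: a_comm)
    show "\<zero>\<^bsub>?I\<^esub> \<oplus>\<^bsub>?I\<^esub> u = u"
      using \<open>u \<in> carrier G\<close> by simp
    show "u \<oplus>\<^bsub>?I\<^esub> v \<in> carrier ?I"
      using abc uvw additive by (simp add: image_iff) (metis a_closed)
    have "g (\<ominus> a) \<oplus> g a = g (\<ominus> a \<oplus> a)"
      using abc by (simp add: additive)
    also have "\<dots> = \<zero>"
      using abc g_zero by (simp add: l_neg)
    finally show "\<exists>v\<in>carrier ?I. v \<oplus>\<^bsub>?I\<^esub> u = \<zero>\<^bsub>?I\<^esub>"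
      using abc uvw by auto
  next
    show "\<zero>\<^bsub>?I\<^esub> \<in> carrier ?I"
      using g_zero by (simp add: image_iff) (metis zero_closed)
  qed
qed

lemma R_homI:
  assumes "\<phi> \<in> carrier M \<rightarrow>\<^sub>E carrier N"
    and "\<And>p q. p \<in> carrier M \<Longrightarrow> q \<in> carrier M \<Longrightarrow> \<phi> (p \<oplus>\<^bsub>M\<^esub> q) = \<phi> p \<oplus>\<^bsub>N\<^esub> \<phi> q"
    and "\<And>r p. r \<in> R_carrier H \<Longrightarrow> p \<in> carrier M \<Longrightarrow> \<phi> (act r p) = act' r (\<phi> p)"
  shows "\<phi> \<in> R_hom H M act N act'"
  using assms by (simp add: R_hom_def)

lemma
  assumes "\<phi> \<in> R_hom H M act N act'"
  shows R_hom_extensional: "\<phi> \<in> carrier M \<rightarrow>\<^sub>E carrier N"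
    and R_hom_add: "\<And>p q. p \<in> carrier M \<Longrightarrow> q \<in> carrier M \<Longrightarrow> \<phi> (p \<oplus>\<^bsub>M\<^esub> q) = \<phi> p \<oplus>\<^bsub>N\<^esub> \<phi> q"
    and R_hom_act: "\<And>r p. r \<in> R_carrier H \<Longrightarrow> p \<in> carrier M \<Longrightarrow> \<phi> (act r p) = act' r (\<phi> p)"
  using assms by (simp_all add: R_hom_def)

lemma E_homI:
  assumes "\<And>x. \<eta> x \<in> carrier (PM x) \<rightarrow>\<^sub>E carrier (QM x)"
    and "\<And>x v w. v \<in> carrier (PM x) \<Longrightarrow> w \<in> carrier (PM x) \<Longrightarrow>
      \<eta> x (v \<oplus>\<^bsub>PM x\<^esub> w) = \<eta> x v \<oplus>\<^bsub>QM x\<^esub> \<eta> x w"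
    and "\<And>x y f v. f \<in> carrier (H x y) \<Longrightarrow> v \<in> carrier (PM x) \<Longrightarrow>
      \<eta> y (pact x y f v) = qact x y f (\<eta> x v)"
  shows "\<eta> \<in> E_hom H PM pact QM qact"
  using assms by (simp add: E_hom_def)

lemma
  assumes "\<eta> \<in> E_hom H PM pact QM qact"
  shows E_hom_extensional: "\<eta> x \<in> carrier (PM x) \<rightarrow>\<^sub>E carrier (QM x)"
    and E_hom_add: "\<And>v w. v \<in> carrier (PM x) \<Longrightarrow> w \<in> carrier (PM x) \<Longrightarrow>
      \<eta> x (v \<oplus>\<^bsub>PM x\<^esub> w) = \<eta> x v \<oplus>\<^bsub>QM x\<^esub> \<eta> x w"
    and E_hom_natural: "\<And>y f v. f \<in> carrier (H x y) \<Longrightarrow> v \<in> carrier (PM x) \<Longrightarrow>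
      \<eta> y (pact x y f v) = qact x y f (\<eta> x v)"
  using assms by (simp_all add: E_hom_def)

lemma R_self_simps [simp]:
  "carrier (R_self H cmp) = R_carrier H"
  "r \<oplus>\<^bsub>R_self H cmp\<^esub> s = R_add H r s"
  by (simp_all add: R_self_def)

lemma hat_module_simps [simp]:
  "carrier (hat_module PM) = hat_carrier PM"
  "\<zero>\<^bsub>hat_module PM\<^esub> = (\<lambda>x. \<zero>\<^bsub>PM x\<^esub>)"
  by (simp_all add: hat_module_def)

lemma hat_module_add: "u \<oplus>\<^bsub>hat_module PM\<^esub> v = (\<lambda>x. u x \<oplus>\<^bsub>PM x\<^esub> v x)"
  by (simp add: hat_module_def)

lemma mem_hat_carrier: "u \<in> hat_carrier PM \<longleftrightarrow> (\<forall>x. u x \<in> carrier (PM x))"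
  by (simp add: hat_carrier_def)

lemma hat_carrierD: "u \<in> hat_carrier PM \<Longrightarrow> u x \<in> carrier (PM x)"
  by (simp add: hat_carrier_def)

lemma hat_hom_apply: "u \<in> hat_carrier PM \<Longrightarrow> hat_hom PM \<eta> u = (\<lambda>x. \<eta> x (u x))"
  by (simp add: hat_hom_def)

lemma abelian_group_hat_module:
  assumes "\<And>x. abelian_group (PM x)"
  shows "abelian_group (hat_module PM)"
proof (rule abelian_groupI)
  have monoid: "abelian_monoid (PM x)" for x
    using assms abelian_group_def by blast
  fix u v w
  assume "u \<in> carrier (hat_module PM)" "v \<in> carrier (hat_module PM)" "w \<in> carrier (hat_module PM)"
  then have u: "\<And>x. u x \<in> carrier (PM x)" and v: "\<And>x. v x \<in> carrier (PM x)"
    and w: "\<And>x. w x \<in> carrier (PM x)"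
    by (simp_all add: mem_hat_carrier)
  show "u \<oplus>\<^bsub>hat_module PM\<^esub> v \<in> carrier (hat_module PM)"
    using u v abelian_monoid.a_closed[OF monoid] by (simp add: hat_module_add mem_hat_carrier)
  show "u \<oplus>\<^bsub>hat_module PM\<^esub> v \<oplus>\<^bsub>hat_module PM\<^esub> w = u \<oplus>\<^bsub>hat_module PM\<^esub> (v \<oplus>\<^bsub>hat_module PM\<^esub> w)"
    using u v w abelian_monoid.a_assoc[OF monoid] by (simp add: hat_module_add)
  show "u \<oplus>\<^bsub>hat_module PM\<^esub> v = v \<oplus>\<^bsub>hat_module PM\<^esub> u"
    using u v abelian_monoid.a_comm[OF monoid] by (simp add: hat_module_add)
  show "\<zero>\<^bsub>hat_module PM\<^esub> \<oplus>\<^bsub>hat_module PM\<^esub> u = u"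
    using u abelian_monoid.l_zero[OF monoid] by (simp add: hat_module_add)
  show "\<exists>v\<in>carrier (hat_module PM). v \<oplus>\<^bsub>hat_module PM\<^esub> u = \<zero>\<^bsub>hat_module PM\<^esub>"
    using u abelian_group.l_neg[OF assms] abelian_group.a_inv_closed[OF assms]
    by (intro bexI[of _ "\<lambda>x. \<ominus>\<^bsub>PM x\<^esub> u x"]) (auto simp: hat_module_add mem_hat_carrier)
qed (use assms abelian_group_def abelian_monoid.zero_closed in \<open>fastforce simp: mem_hat_carrier\<close>)

definition hat_incl :: "('o \<Rightarrow> 'v ring) \<Rightarrow> 'o \<Rightarrow> 'v \<Rightarrow> 'o \<Rightarrow> 'v" where
  "hat_incl PM x v = (\<lambda>y. if y = x then v else \<zero>\<^bsub>PM y\<^esub>)"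

lemma hat_incl_zero: "hat_incl PM x \<zero>\<^bsub>PM x\<^esub> = (\<lambda>y. \<zero>\<^bsub>PM y\<^esub>)"
  by (auto simp: hat_incl_def)

lemma hat_incl_at [simp]: "hat_incl PM x v x = v"
  by (simp add: hat_incl_def)

lemma hat_incl_other: "y \<noteq> x \<Longrightarrow> hat_incl PM x v y = \<zero>\<^bsub>PM y\<^esub>"
  by (simp add: hat_incl_def)

locale preadditive_category =
  fixes H :: "'o \<Rightarrow> 'o \<Rightarrow> 'm ring"
    and cmp :: "'o \<Rightarrow> 'o \<Rightarrow> 'o \<Rightarrow> 'm \<Rightarrow> 'm \<Rightarrow> 'm"
    and idn :: "'o \<Rightarrow> 'm"
  assumes preadditive: "preadditive_cat H cmp idn"
begin

sublocale Hom: abelian_group "H x y" for x y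
  using preadditive by (simp add: preadditive_cat_def)

lemma idn_closed: "idn x \<in> carrier (H x x)"
  using preadditive by (simp add: preadditive_cat_def)

lemma cmp_closed: "f \<in> carrier (H x y) \<Longrightarrow> g \<in> carrier (H y z) \<Longrightarrow> cmp x y z g f \<in> carrier (H x z)"
  using preadditive by (simp add: preadditive_cat_def)

lemma cmp_idn_left: "f \<in> carrier (H x y) \<Longrightarrow> cmp x y y (idn y) f = f"
  using preadditive by (simp add: preadditive_cat_def)

lemma cmp_idn_right: "f \<in> carrier (H x y) \<Longrightarrow> cmp x x y f (idn x) = f"
  using preadditive by (simp add: preadditive_cat_def)

lemma cmp_add_left:
  "f \<in> carrier (H x y) \<Longrightarrow> g \<in> carrier (H y z) \<Longrightarrow> g' \<in> carrier (H y z) \<Longrightarrow>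
    cmp x y z (g \<oplus>\<^bsub>H y z\<^esub> g') f = cmp x y z g f \<oplus>\<^bsub>H x z\<^esub> cmp x y z g' f"
  using preadditive by (simp add: preadditive_cat_def)

lemma cmp_add_right:
  "f \<in> carrier (H x y) \<Longrightarrow> f' \<in> carrier (H x y) \<Longrightarrow> g \<in> carrier (H y z) \<Longrightarrow>
    cmp x y z g (f \<oplus>\<^bsub>H x y\<^esub> f') = cmp x y z g f \<oplus>\<^bsub>H x z\<^esub> cmp x y z g f'"
  using preadditive by (simp add: preadditive_cat_def)

lemma cmp_zero_left: "f \<in> carrier (H x y) \<Longrightarrow> cmp x y z \<zero>\<^bsub>H y z\<^esub> f = \<zero>\<^bsub>H x z\<^esub>"
  by (rule Hom.idem_imp_zero) (simp_all add: cmp_closed flip: cmp_add_left)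

lemma cmp_zero_right: "g \<in> carrier (H y z) \<Longrightarrow> cmp x y z g \<zero>\<^bsub>H x y\<^esub> = \<zero>\<^bsub>H x z\<^esub>"
  by (rule Hom.idem_imp_zero) (simp_all add: cmp_closed flip: cmp_add_right)

definition R_supp :: "('o \<Rightarrow> 'o \<Rightarrow> 'm) \<Rightarrow> ('o \<times> 'o) set" where
  "R_supp r = {(x, y). r x y \<noteq> \<zero>\<^bsub>H x y\<^esub>}"

definition R_single :: "'o \<Rightarrow> 'o \<Rightarrow> 'm \<Rightarrow> 'o \<Rightarrow> 'o \<Rightarrow> 'm" where
  "R_single x y f = (\<lambda>a b. if a = x \<and> b = y then f else \<zero>\<^bsub>H a b\<^esub>)"

definition local_unit :: "'o \<Rightarrow> 'o \<Rightarrow> 'o \<Rightarrow> 'm" where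
  "local_unit x = R_single x x (idn x)"

lemma R_carrier_iff: "r \<in> R_carrier H \<longleftrightarrow> (\<forall>x y. r x y \<in> carrier (H x y)) \<and> finite (R_supp r)"
  by (simp add: R_carrier_def R_supp_def)

lemma R_carrier_closed: "r \<in> R_carrier H \<Longrightarrow> r x y \<in> carrier (H x y)"
  by (simp add: R_carrier_iff)

lemma finite_R_supp: "r \<in> R_carrier H \<Longrightarrow> finite (R_supp r)"
  by (simp add: R_carrier_iff)

lemma R_single_closed: "f \<in> carrier (H x y) \<Longrightarrow> R_single x y f \<in> R_carrier H"
  unfolding R_carrier_iff
proof
  show "f \<in> carrier (H x y) \<Longrightarrow> \<forall>a b. R_single x y f a b \<in> carrier (H a b)"
    by (simp add: R_single_def)
  have "R_supp (R_single x y f) \<subseteq> {(x, y)}"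
    by (auto simp: R_supp_def R_single_def split: if_splits)
  then show "finite (R_supp (R_single x y f))"
    by (rule finite_subset) simp
qed

lemma local_unit_closed: "local_unit x \<in> R_carrier H"
  unfolding local_unit_def by (rule R_single_closed[OF idn_closed])

lemma R_single_zero: "R_single x y \<zero>\<^bsub>H x y\<^esub> = R_zero H"
  by (intro ext) (simp add: R_single_def R_zero_def)

lemma R_zero_closed: "R_zero H \<in> R_carrier H"
  by (metis R_single_closed R_single_zero Hom.zero_closed)

lemma R_supp_R_add: "R_supp (R_add H r s) \<subseteq> R_supp r \<union> R_supp s"
  by (auto simp: R_supp_def R_add_def)

lemma R_add_closed:
  assumes r: "r \<in> R_carrier H" and s: "s \<in> R_carrier H"
  shows "R_add H r s \<in> R_carrier H"
  unfolding R_carrier_iff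
proof
  show "\<forall>x y. R_add H r s x y \<in> carrier (H x y)"
    using r s by (simp add: R_add_def R_carrier_closed)
  show "finite (R_supp (R_add H r s))"
    using r s R_supp_R_add by (meson finite_R_supp finite_UnI finite_subset)
qed

lemma R_mult_eq_finsum:
  assumes r: "r \<in> R_carrier H" and s: "s \<in> R_carrier H" and "finite F"
    and F: "\<And>y. s x y \<noteq> \<zero>\<^bsub>H x y\<^esub> \<Longrightarrow> r y z \<noteq> \<zero>\<^bsub>H y z\<^esub> \<Longrightarrow> y \<in> F"
  shows "R_mult H cmp r s x z = (\<Oplus>\<^bsub>H x z\<^esub>y\<in>F. cmp x y z (r y z) (s x y))"
  unfolding R_mult_def
  using assms by (intro Hom.add.finprod_mono_neutral_cong_left)
    (auto simp: R_carrier_closed cmp_zero_left cmp_zero_right cmp_closed)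

lemma R_mult_closed:
  assumes r: "r \<in> R_carrier H" and s: "s \<in> R_carrier H"
  shows "R_mult H cmp r s \<in> R_carrier H"
  unfolding R_carrier_iff
proof
  show "\<forall>x z. R_mult H cmp r s x z \<in> carrier (H x z)"
    using r s by (auto simp: R_mult_def R_carrier_closed cmp_closed intro!: Hom.finsum_closed)
  have "R_supp (R_mult H cmp r s) \<subseteq> fst ` R_supp s \<times> snd ` R_supp r"
  proof (clarify)
    fix x z assume "(x, z) \<in> R_supp (R_mult H cmp r s)"
    then have "{y. s x y \<noteq> \<zero>\<^bsub>H x y\<^esub> \<and> r y z \<noteq> \<zero>\<^bsub>H y z\<^esub>} \<noteq> {}"
      by (auto simp: R_supp_def R_mult_def simp del: Collect_empty_eq)
    then show "x \<in> fst ` R_supp s \<and> z \<in> snd ` R_supp r"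
      by (force simp: R_supp_def)
  qed
  then show "finite (R_supp (R_mult H cmp r s))"
    using r s by (meson finite_R_supp finite_SigmaI finite_imageI finite_subset)
qed

lemma R_mult_add_left:
  assumes r: "r \<in> R_carrier H" and r': "r' \<in> R_carrier H" and s: "s \<in> R_carrier H"
  shows "R_mult H cmp (R_add H r r') s = R_add H (R_mult H cmp r s) (R_mult H cmp r' s)"
proof (intro ext)
  fix x z
  let ?F = "snd ` R_supp s"
  have F: "finite ?F" "\<And>y. s x y \<noteq> \<zero>\<^bsub>H x y\<^esub> \<Longrightarrow> y \<in> ?F"
    using finite_R_supp[OF s] by (force simp: R_supp_def)+
  have "R_mult H cmp (R_add H r r') s x z = (\<Oplus>\<^bsub>H x z\<^esub>y\<in>?F. cmp x y z (R_add H r r' y z) (s x y))"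
    using F by (intro R_mult_eq_finsum R_add_closed r r' s)
  also have "\<dots> = (\<Oplus>\<^bsub>H x z\<^esub>y\<in>?F. cmp x y z (r y z) (s x y)) \<oplus>\<^bsub>H x z\<^esub>
                  (\<Oplus>\<^bsub>H x z\<^esub>y\<in>?F. cmp x y z (r' y z) (s x y))"
    using r r' s
    by (simp add: R_add_def cmp_add_left R_carrier_closed cmp_closed flip: Hom.finsum_addf)
  also have "\<dots> = R_add H (R_mult H cmp r s) (R_mult H cmp r' s) x z"
    using F by (simp add: R_add_def R_mult_eq_finsum r r' s)
  finally show "R_mult H cmp (R_add H r r') s x z = R_add H (R_mult H cmp r s) (R_mult H cmp r' s) x z" .
qed

lemma R_mult_add_right:
  assumes r: "r \<in> R_carrier H" and s: "s \<in> R_carrier H" and s': "s' \<in> R_carrier H"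
  shows "R_mult H cmp r (R_add H s s') = R_add H (R_mult H cmp r s) (R_mult H cmp r s')"
proof (intro ext)
  fix x z
  let ?F = "fst ` R_supp r"
  have F: "finite ?F" "\<And>y. r y z \<noteq> \<zero>\<^bsub>H y z\<^esub> \<Longrightarrow> y \<in> ?F"
    using finite_R_supp[OF r] by (force simp: R_supp_def)+
  have "R_mult H cmp r (R_add H s s') x z = (\<Oplus>\<^bsub>H x z\<^esub>y\<in>?F. cmp x y z (r y z) (R_add H s s' x y))"
    using F by (intro R_mult_eq_finsum R_add_closed r s s')
  also have "\<dots> = (\<Oplus>\<^bsub>H x z\<^esub>y\<in>?F. cmp x y z (r y z) (s x y)) \<oplus>\<^bsub>H x z\<^esub>
                  (\<Oplus>\<^bsub>H x z\<^esub>y\<in>?F. cmp x y z (r y z) (s' x y))"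
    using r s s'
    by (simp add: R_add_def cmp_add_right R_carrier_closed cmp_closed flip: Hom.finsum_addf)
  also have "\<dots> = R_add H (R_mult H cmp r s) (R_mult H cmp r s') x z"
    using F by (simp add: R_add_def R_mult_eq_finsum r s s')
  finally show "R_mult H cmp r (R_add H s s') x z = R_add H (R_mult H cmp r s) (R_mult H cmp r s') x z" .
qed

lemma R_mult_single_single:
  assumes f: "f \<in> carrier (H x y)" and g: "g \<in> carrier (H y' z)"
  shows "R_mult H cmp (R_single y' z g) (R_single x y f) =
    (if y = y' then R_single x z (cmp x y z g f) else R_zero H)"
proof (intro ext)
  fix a c
  let ?F = "if y = y' \<and> a = x \<and> c = z then {y} else {}"
  have "R_mult H cmp (R_single y' z g) (R_single x y f) a c =
      (\<Oplus>\<^bsub>H a c\<^esub>b\<in>?F. cmp a b c (R_single y' z g b c) (R_single x y f a b))"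
    using f g by (intro R_mult_eq_finsum R_single_closed) (auto simp: R_single_def split: if_splits)
  also have "\<dots> = (if y = y' then R_single x z (cmp x y z g f) else R_zero H) a c"
    using f g by (auto simp: R_single_def R_zero_def cmp_closed)
  finally show "R_mult H cmp (R_single y' z g) (R_single x y f) a c =
      (if y = y' then R_single x z (cmp x y z g f) else R_zero H) a c" .
qed

lemma R_mult_single_local_unit:
  "f \<in> carrier (H x y) \<Longrightarrow> R_mult H cmp (R_single x y f) (local_unit x) = R_single x y f"
  unfolding local_unit_def by (simp add: R_mult_single_single idn_closed cmp_idn_right)

lemma R_mult_local_unit_single:
  "f \<in> carrier (H x y) \<Longrightarrow> R_mult H cmp (local_unit b) (R_single x y f) =
    (if b = y then R_single x y f else R_zero H)"
  unfolding local_unit_def by (simp add: R_mult_single_single idn_closed cmp_idn_left)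

lemma local_unit_idem: "R_mult H cmp (local_unit x) (local_unit x) = local_unit x"
  by (metis R_mult_local_unit_single idn_closed local_unit_def)

lemma R_mult_local_unit_eq_zero:
  assumes "x \<notin> fst ` R_supp r"
  shows "R_mult H cmp r (local_unit x) = R_zero H"
proof (intro ext)
  fix a c
  have "{b. local_unit x a b \<noteq> \<zero>\<^bsub>H a b\<^esub> \<and> r b c \<noteq> \<zero>\<^bsub>H b c\<^esub>} = {}"
    using assms by (force simp: local_unit_def R_single_def R_supp_def)
  then show "R_mult H cmp r (local_unit x) a c = R_zero H a c"
    by (simp add: R_mult_def R_zero_def del: Collect_empty_eq)
qed

lemma R_carrier_induct [consumes 1, case_names single add]:
  assumes "r \<in> R_carrier H"
    and single: "\<And>x y f. f \<in> carrier (H x y) \<Longrightarrow> P (R_single x y f)"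
    and add: "\<And>r s. r \<in> R_carrier H \<Longrightarrow> s \<in> R_carrier H \<Longrightarrow> P r \<Longrightarrow> P s \<Longrightarrow> P (R_add H r s)"
  shows "P r"
proof -
  have "P r" if "finite S" "r \<in> R_carrier H" "R_supp r \<subseteq> S" for S r
    using that
  proof (induction S arbitrary: r rule: finite_induct)
    case empty
    then have "r = R_single x x \<zero>\<^bsub>H x x\<^esub>" for x
      by (auto simp: R_single_zero R_zero_def R_supp_def)
    then show ?case
      using single[OF Hom.zero_closed] by metis
  next
    case (insert p S)
    obtain a b where p: "p = (a, b)"
      by fastforce
    define r' where "r' = (\<lambda>x y. if (x, y) = p then \<zero>\<^bsub>H x y\<^esub> else r x y)"
    have "R_supp r' \<subseteq> R_supp r" "R_supp r' \<subseteq> S"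
      using insert.prems(2) by (auto simp: r'_def R_supp_def)
    moreover have "r' \<in> R_carrier H"
      using insert.prems(1) calculation(1)
      by (auto simp: R_carrier_iff r'_def intro: finite_subset)
    moreover have "r = R_add H (R_single a b (r a b)) r'"
      using insert.prems(1) by (intro ext) (auto simp: R_add_def R_single_def r'_def p R_carrier_closed)
    ultimately show ?case
      using add R_single_closed single R_carrier_closed insert.IH insert.prems(1) by metis
  qed
  then show ?thesis
    using assms(1) finite_R_supp by blast
qed

lemma orbit_map_R_hom:
  assumes "R_module H cmp M act" and "p \<in> carrier M"
  shows "(\<lambda>r\<in>R_carrier H. act r p) \<in> R_hom H (R_self H cmp) (R_mult H cmp) M act"
  using assms by (intro R_homI) (auto simp: R_module_def R_add_closed R_mult_closed)

end

locale left_R_module = preadditive_category H cmp idn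
  for H :: "'o \<Rightarrow> 'o \<Rightarrow> 'm ring" and cmp idn +
  fixes M :: "'p ring" and act :: "('o \<Rightarrow> 'o \<Rightarrow> 'm) \<Rightarrow> 'p \<Rightarrow> 'p"
  assumes R_module: "R_module H cmp M act"
begin

sublocale Mod: abelian_group M
  using R_module by (simp add: R_module_def)

lemma act_closed: "r \<in> R_carrier H \<Longrightarrow> p \<in> carrier M \<Longrightarrow> act r p \<in> carrier M"
  using R_module by (simp add: R_module_def)

lemma act_add_left:
  "r \<in> R_carrier H \<Longrightarrow> s \<in> R_carrier H \<Longrightarrow> p \<in> carrier M \<Longrightarrow>
    act (R_add H r s) p = act r p \<oplus>\<^bsub>M\<^esub> act s p"
  using R_module by (simp add: R_module_def)

lemma act_add_right:
  "r \<in> R_carrier H \<Longrightarrow> p \<in> carrier M \<Longrightarrow> q \<in> carrier M \<Longrightarrow>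
    act r (p \<oplus>\<^bsub>M\<^esub> q) = act r p \<oplus>\<^bsub>M\<^esub> act r q"
  using R_module by (simp add: R_module_def)

lemma act_mult:
  "r \<in> R_carrier H \<Longrightarrow> s \<in> R_carrier H \<Longrightarrow> p \<in> carrier M \<Longrightarrow>
    act (R_mult H cmp r s) p = act r (act s p)"
  using R_module by (simp add: R_module_def)

lemma act_R_zero: "p \<in> carrier M \<Longrightarrow> act (R_zero H) p = \<zero>\<^bsub>M\<^esub>"
proof (rule Mod.idem_imp_zero)
  assume p: "p \<in> carrier M"
  then show "act (R_zero H) p \<in> carrier M"
    by (simp add: act_closed R_zero_closed)
  have "R_add H (R_zero H) (R_zero H) = R_zero H"
    by (simp add: R_add_def R_zero_def)
  then show "act (R_zero H) p \<oplus>\<^bsub>M\<^esub> act (R_zero H) p = act (R_zero H) p"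
    using p by (metis act_add_left R_zero_closed)
qed

lemma act_zero_right: "r \<in> R_carrier H \<Longrightarrow> act r \<zero>\<^bsub>M\<^esub> = \<zero>\<^bsub>M\<^esub>"
  by (rule Mod.idem_imp_zero) (simp_all add: act_closed flip: act_add_right)

lemma act_finsum:
  assumes r: "r \<in> R_carrier H" and "finite F" and "g \<in> F \<rightarrow> carrier M"
  shows "act r (\<Oplus>\<^bsub>M\<^esub>x\<in>F. g x) = (\<Oplus>\<^bsub>M\<^esub>x\<in>F. act r (g x))"
  using assms(2,3)
proof (induction F rule: finite_induct)
  case empty
  then show ?case
    using act_zero_right[OF r] by simp
next
  case (insert x F)
  then show ?case
    using r by (simp add: act_add_right act_closed Pi_iff Mod.finsum_closed)
qed

end

locale left_E_module = preadditive_category H cmp idn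
  for H :: "'o \<Rightarrow> 'o \<Rightarrow> 'm ring" and cmp idn +
  fixes PM :: "'o \<Rightarrow> 'v ring" and pact :: "'o \<Rightarrow> 'o \<Rightarrow> 'm \<Rightarrow> 'v \<Rightarrow> 'v"
  assumes E_module: "E_module H cmp idn PM pact"
begin

sublocale Comp: abelian_group "PM x" for x
  using E_module by (simp add: E_module_def)

lemma pact_closed: "f \<in> carrier (H x y) \<Longrightarrow> v \<in> carrier (PM x) \<Longrightarrow> pact x y f v \<in> carrier (PM y)"
  using E_module by (simp add: E_module_def)

lemma pact_add_left:
  "f \<in> carrier (H x y) \<Longrightarrow> f' \<in> carrier (H x y) \<Longrightarrow> v \<in> carrier (PM x) \<Longrightarrow>
    pact x y (f \<oplus>\<^bsub>H x y\<^esub> f') v = pact x y f v \<oplus>\<^bsub>PM y\<^esub> pact x y f' v"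
  using E_module by (simp add: E_module_def)

lemma pact_add_right:
  "f \<in> carrier (H x y) \<Longrightarrow> v \<in> carrier (PM x) \<Longrightarrow> w \<in> carrier (PM x) \<Longrightarrow>
    pact x y f (v \<oplus>\<^bsub>PM x\<^esub> w) = pact x y f v \<oplus>\<^bsub>PM y\<^esub> pact x y f w"
  using E_module by (simp add: E_module_def)

lemma pact_idn: "v \<in> carrier (PM x) \<Longrightarrow> pact x x (idn x) v = v"
  using E_module by (simp add: E_module_def)

lemma pact_cmp:
  "f \<in> carrier (H x y) \<Longrightarrow> g \<in> carrier (H y z) \<Longrightarrow> v \<in> carrier (PM x) \<Longrightarrow>
    pact x z (cmp x y z g f) v = pact y z g (pact x y f v)"
  using E_module by (simp add: E_module_def)

lemma pact_zero_left: "v \<in> carrier (PM x) \<Longrightarrow> pact x y \<zero>\<^bsub>H x y\<^esub> v = \<zero>\<^bsub>PM y\<^esub>"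
  by (rule Comp.idem_imp_zero) (simp_all add: pact_closed flip: pact_add_left)

lemma pact_zero_right: "f \<in> carrier (H x y) \<Longrightarrow> pact x y f \<zero>\<^bsub>PM x\<^esub> = \<zero>\<^bsub>PM y\<^esub>"
  by (rule Comp.idem_imp_zero) (simp_all add: pact_closed flip: pact_add_right)

lemma hat_incl_closed: "v \<in> carrier (PM x) \<Longrightarrow> hat_incl PM x v \<in> hat_carrier PM"
  by (simp add: hat_incl_def mem_hat_carrier)

lemma hat_act_eq_finsum:
  assumes "r \<in> R_carrier H" "u \<in> hat_carrier PM" "finite F"
    and "\<And>x. r x y \<noteq> \<zero>\<^bsub>H x y\<^esub> \<Longrightarrow> x \<in> F"
  shows "hat_act H PM pact r u y = (\<Oplus>\<^bsub>PM y\<^esub>x\<in>F. pact x y (r x y) (u x))"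
  unfolding hat_act_def
  using assms by (intro Comp.add.finprod_mono_neutral_cong_left)
    (auto simp: pact_zero_left pact_closed R_carrier_closed hat_carrierD)

lemma hat_act_closed: "r \<in> R_carrier H \<Longrightarrow> u \<in> hat_carrier PM \<Longrightarrow> hat_act H PM pact r u \<in> hat_carrier PM"
  by (auto simp: hat_act_def mem_hat_carrier pact_closed R_carrier_closed hat_carrierD
      intro!: Comp.finsum_closed)

lemma hat_act_single:
  assumes f: "f \<in> carrier (H x y)" and u: "u \<in> hat_carrier PM"
  shows "hat_act H PM pact (R_single x y f) u = hat_incl PM y (pact x y f (u x))"
proof
  fix b
  have "hat_act H PM pact (R_single x y f) u b =
      (\<Oplus>\<^bsub>PM b\<^esub>a\<in>(if b = y then {x} else {}). pact a b (R_single x y f a b) (u a))"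
    using f u by (intro hat_act_eq_finsum R_single_closed) (auto simp: R_single_def split: if_splits)
  also have "\<dots> = hat_incl PM y (pact x y f (u x)) b"
    using f u by (simp add: hat_incl_def R_single_def pact_closed hat_carrierD)
  finally show "hat_act H PM pact (R_single x y f) u b = hat_incl PM y (pact x y f (u x)) b" .
qed

lemma hat_act_local_unit:
  "u \<in> hat_carrier PM \<Longrightarrow> hat_act H PM pact (local_unit x) u = hat_incl PM x (u x)"
  by (simp add: local_unit_def hat_act_single idn_closed pact_idn hat_carrierD)

lemma hat_act_R_zero: "u \<in> hat_carrier PM \<Longrightarrow> hat_act H PM pact (R_zero H) u = (\<lambda>y. \<zero>\<^bsub>PM y\<^esub>)"
  by (metis Hom.zero_closed R_single_zero hat_act_single hat_incl_zero hat_carrierD pact_zero_left)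

lemma hat_act_add_right:
  assumes r: "r \<in> R_carrier H" and u: "u \<in> hat_carrier PM" and v: "v \<in> hat_carrier PM"
  shows "hat_act H PM pact r (u \<oplus>\<^bsub>hat_module PM\<^esub> v) =
    hat_act H PM pact r u \<oplus>\<^bsub>hat_module PM\<^esub> hat_act H PM pact r v"
  using assms
  by (auto simp: hat_act_def hat_module_add pact_add_right pact_closed R_carrier_closed hat_carrierD
      simp flip: Comp.finsum_addf intro!: Comp.finsum_cong')

lemma hat_act_add_left:
  assumes r: "r \<in> R_carrier H" and s: "s \<in> R_carrier H" and u: "u \<in> hat_carrier PM"
  shows "hat_act H PM pact (R_add H r s) u =
    hat_act H PM pact r u \<oplus>\<^bsub>hat_module PM\<^esub> hat_act H PM pact s u"
proof
  fix y
  let ?F = "fst ` R_supp r \<union> fst ` R_supp s"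
  have F: "finite ?F"
    using r s finite_R_supp by blast
  have off_F: "r x y = \<zero>\<^bsub>H x y\<^esub>" "s x y = \<zero>\<^bsub>H x y\<^esub>" if "x \<notin> ?F" for x
    using that by (force simp: R_supp_def)+
  then have "R_add H r s x y = \<zero>\<^bsub>H x y\<^esub>" if "x \<notin> ?F" for x
    using that by (simp add: R_add_def)
  with off_F have
    "hat_act H PM pact (R_add H r s) u y = (\<Oplus>\<^bsub>PM y\<^esub>x\<in>?F. pact x y (R_add H r s x y) (u x))"
    "hat_act H PM pact r u y = (\<Oplus>\<^bsub>PM y\<^esub>x\<in>?F. pact x y (r x y) (u x))"
    "hat_act H PM pact s u y = (\<Oplus>\<^bsub>PM y\<^esub>x\<in>?F. pact x y (s x y) (u x))"
    using r s u F by (intro hat_act_eq_finsum R_add_closed; blast)+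
  then show "hat_act H PM pact (R_add H r s) u y =
      (hat_act H PM pact r u \<oplus>\<^bsub>hat_module PM\<^esub> hat_act H PM pact s u) y"
    using r s u
    by (simp add: hat_module_add R_add_def pact_add_left pact_closed R_carrier_closed hat_carrierD
        flip: Comp.finsum_addf)
qed

lemma hat_act_mult_single_left:
  assumes g: "g \<in> carrier (H y z)" and s: "s \<in> R_carrier H" and u: "u \<in> hat_carrier PM"
  shows "hat_act H PM pact (R_mult H cmp (R_single y z g) s) u =
    hat_act H PM pact (R_single y z g) (hat_act H PM pact s u)"
  using s
proof (induction s rule: R_carrier_induct)
  case (single x y' f)
  show ?case
  proof (cases "y' = y")
    case True
    then show ?thesis
      using single g u
      by (simp add: R_mult_single_single hat_act_single hat_incl_closed pact_closed cmp_closed pact_cmp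
          hat_carrierD)
  next
    case False
    then show ?thesis
      using single g u
      by (simp add: R_mult_single_single hat_act_single hat_incl_closed pact_closed hat_act_R_zero
          hat_carrierD hat_incl_other pact_zero_right hat_incl_zero)
  qed
next
  case (add s s')
  then show ?case
    using g u
    by (simp add: R_mult_add_right R_single_closed R_mult_closed hat_act_add_left hat_act_add_right
        hat_act_closed)
qed

lemma hat_act_mult:
  assumes r: "r \<in> R_carrier H" and s: "s \<in> R_carrier H" and u: "u \<in> hat_carrier PM"
  shows "hat_act H PM pact (R_mult H cmp r s) u = hat_act H PM pact r (hat_act H PM pact s u)"
  using r
proof (induction r rule: R_carrier_induct)
  case (single y z g)
  then show ?case
    using s u by (rule hat_act_mult_single_left)
next
  case (add r r')
  then show ?case
    using s u by (simp add: R_mult_add_left R_mult_closed hat_act_add_left hat_act_closed)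
qed

lemma hat_R_module: "R_module H cmp (hat_module PM) (hat_act H PM pact)"
  unfolding R_module_def
  by (simp add: abelian_group_hat_module Comp.abelian_group_axioms hat_act_closed hat_act_add_right
      hat_act_add_left hat_act_mult)

text \<open>An \<open>R\<close>-linear map \<open>\<phi>\<close> from \<open>R\<close> is determined by the components \<open>\<phi>(e\<^sub>x)\<^sub>x\<close>, because
  every element concentrated in \<open>Hom(x, y)\<close> is fixed by right multiplication with \<open>e\<^sub>x\<close>.\<close>

lemma R_hom_from_R_eq_hat_act:
  assumes \<phi>: "\<phi> \<in> R_hom H (R_self H cmp) (R_mult H cmp) (hat_module PM) (hat_act H PM pact)"
    and r: "r \<in> R_carrier H"
  shows "\<phi> r = hat_act H PM pact r (\<lambda>x. \<phi> (local_unit x) x)"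
proof -
  have unit: "\<phi> (local_unit x) \<in> hat_carrier PM" for x
    using R_hom_extensional[OF \<phi>] local_unit_closed by fastforce
  then have units: "(\<lambda>x. \<phi> (local_unit x) x) \<in> hat_carrier PM"
    by (simp add: mem_hat_carrier hat_carrierD)
  show ?thesis
    using r
  proof (induction r rule: R_carrier_induct)
    case (single x y f)
    have "\<phi> (R_single x y f) = \<phi> (R_mult H cmp (R_single x y f) (local_unit x))"
      using single by (simp add: R_mult_single_local_unit)
    also have "\<dots> = hat_act H PM pact (R_single x y f) (\<phi> (local_unit x))"
      using R_hom_act[OF \<phi>] single by (simp add: R_single_closed local_unit_closed)
    also have "\<dots> = hat_act H PM pact (R_single x y f) (\<lambda>x. \<phi> (local_unit x) x)"
      using single unit units by (simp add: hat_act_single)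
    finally show ?case .
  next
    case (add r s)
    then show ?case
      using R_hom_add[OF \<phi>] units by (simp add: hat_act_add_left)
  qed
qed

lemma hat_c_unital: "c_unital H cmp (hat_module PM) (hat_act H PM pact)"
  unfolding c_unital_def
proof (rule bij_betw_imageI)
  show "inj_on (\<lambda>p. \<lambda>r\<in>R_carrier H. hat_act H PM pact r p) (carrier (hat_module PM))"
  proof (rule inj_onI)
    fix p q
    assume p: "p \<in> carrier (hat_module PM)" and q: "q \<in> carrier (hat_module PM)"
      and eq: "(\<lambda>r\<in>R_carrier H. hat_act H PM pact r p) = (\<lambda>r\<in>R_carrier H. hat_act H PM pact r q)"
    show "p = q"
    proof
      fix x
      have "hat_act H PM pact (local_unit x) p = hat_act H PM pact (local_unit x) q"
        using fun_cong[OF eq, of "local_unit x"] local_unit_closed by simp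
      then show "p x = q x"
        using p q by (metis hat_act_local_unit hat_incl_at hat_module_simps(1))
    qed
  qed
  show "(\<lambda>p. \<lambda>r\<in>R_carrier H. hat_act H PM pact r p) ` carrier (hat_module PM) =
      R_hom H (R_self H cmp) (R_mult H cmp) (hat_module PM) (hat_act H PM pact)"
  proof (intro equalityI subsetI)
    fix \<phi>
    assume "\<phi> \<in> (\<lambda>p. \<lambda>r\<in>R_carrier H. hat_act H PM pact r p) ` carrier (hat_module PM)"
    then show "\<phi> \<in> R_hom H (R_self H cmp) (R_mult H cmp) (hat_module PM) (hat_act H PM pact)"
      using orbit_map_R_hom[OF hat_R_module] by blast
  next
    fix \<phi>
    assume \<phi>: "\<phi> \<in> R_hom H (R_self H cmp) (R_mult H cmp) (hat_module PM) (hat_act H PM pact)"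
    have "(\<lambda>x. \<phi> (local_unit x) x) \<in> hat_carrier PM"
      using R_hom_extensional[OF \<phi>] local_unit_closed by (fastforce simp: mem_hat_carrier)
    moreover have "\<phi> = (\<lambda>r\<in>R_carrier H. hat_act H PM pact r (\<lambda>x. \<phi> (local_unit x) x))"
      using R_hom_from_R_eq_hat_act[OF \<phi>] R_hom_extensional[OF \<phi>] by (auto simp: PiE_def extensional_def)
    ultimately show "\<phi> \<in> (\<lambda>p. \<lambda>r\<in>R_carrier H. hat_act H PM pact r p) ` carrier (hat_module PM)"
      by auto
  qed
qed

end

lemma (in preadditive_category) hat_module_c_unital_R_module:
  assumes "E_module H cmp idn PM pact"
  shows "R_module H cmp (hat_module PM) (hat_act H PM pact) \<and> c_unital H cmp (hat_module PM) (hat_act H PM pact)"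
proof -
  interpret left_E_module H cmp idn PM pact
    by unfold_locales (fact assms)
  show ?thesis
    using hat_R_module hat_c_unital by blast
qed

locale E_module_pair = preadditive_category H cmp idn +
  P: left_E_module H cmp idn PM pact + Q: left_E_module H cmp idn QM qact
  for H :: "'o \<Rightarrow> 'o \<Rightarrow> 'm ring" and cmp idn
    and PM :: "'o \<Rightarrow> 'v ring" and pact
    and QM :: "'o \<Rightarrow> 'w ring" and qact
begin

lemma E_hom_zero:
  assumes \<eta>: "\<eta> \<in> E_hom H PM pact QM qact"
  shows "\<eta> x \<zero>\<^bsub>PM x\<^esub> = \<zero>\<^bsub>QM x\<^esub>"
proof (rule Q.Comp.idem_imp_zero)
  show "\<eta> x \<zero>\<^bsub>PM x\<^esub> \<in> carrier (QM x)"
    using E_hom_extensional[OF \<eta>] by fastforce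
  have "\<eta> x (\<zero>\<^bsub>PM x\<^esub> \<oplus>\<^bsub>PM x\<^esub> \<zero>\<^bsub>PM x\<^esub>) = \<eta> x \<zero>\<^bsub>PM x\<^esub> \<oplus>\<^bsub>QM x\<^esub> \<eta> x \<zero>\<^bsub>PM x\<^esub>"
    by (rule E_hom_add[OF \<eta>]) simp_all
  then show "\<eta> x \<zero>\<^bsub>PM x\<^esub> \<oplus>\<^bsub>QM x\<^esub> \<eta> x \<zero>\<^bsub>PM x\<^esub> = \<eta> x \<zero>\<^bsub>PM x\<^esub>"
    by simp
qed

lemma E_hom_closed: "\<eta> \<in> E_hom H PM pact QM qact \<Longrightarrow> v \<in> carrier (PM x) \<Longrightarrow> \<eta> x v \<in> carrier (QM x)"
  using E_hom_extensional by fastforce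

lemma hat_act_natural:
  assumes \<eta>: "\<eta> \<in> E_hom H PM pact QM qact"
    and r: "r \<in> R_carrier H" and u: "u \<in> hat_carrier PM"
  shows "(\<lambda>y. \<eta> y (hat_act H PM pact r u y)) = hat_act H QM qact r (\<lambda>x. \<eta> x (u x))"
proof -
  have \<eta>u: "(\<lambda>x. \<eta> x (u x)) \<in> hat_carrier QM"
    using u E_hom_closed[OF \<eta>] by (simp add: mem_hat_carrier)
  show ?thesis
    using r
  proof (induction r rule: R_carrier_induct)
    case (single x y f)
    then show ?case
      using u \<eta>u
      by (auto simp: P.hat_act_single Q.hat_act_single hat_carrierD hat_incl_def E_hom_natural[OF \<eta>]
          E_hom_zero[OF \<eta>])
  next
    case (add r s)
    then show ?case
      using u \<eta>u add.IH[unfolded fun_eq_iff]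
      by (simp add: P.hat_act_add_left Q.hat_act_add_left hat_module_add E_hom_add[OF \<eta>]
          P.hat_act_closed hat_carrierD)
  qed
qed

lemma hat_hom_R_hom:
  assumes \<eta>: "\<eta> \<in> E_hom H PM pact QM qact"
  shows "hat_hom PM \<eta> \<in> R_hom H (hat_module PM) (hat_act H PM pact) (hat_module QM) (hat_act H QM qact)"
proof (rule R_homI)
  show "hat_hom PM \<eta> \<in> carrier (hat_module PM) \<rightarrow>\<^sub>E carrier (hat_module QM)"
    using E_hom_closed[OF \<eta>] by (auto simp: hat_hom_def mem_hat_carrier)
  show "hat_hom PM \<eta> (p \<oplus>\<^bsub>hat_module PM\<^esub> q) = hat_hom PM \<eta> p \<oplus>\<^bsub>hat_module QM\<^esub> hat_hom PM \<eta> q"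
    if "p \<in> carrier (hat_module PM)" "q \<in> carrier (hat_module PM)" for p q
  proof -
    have "p \<oplus>\<^bsub>hat_module PM\<^esub> q \<in> hat_carrier PM"
      using that by (simp add: hat_module_add mem_hat_carrier hat_carrierD)
    then show ?thesis
      using that by (simp add: hat_hom_apply hat_module_add E_hom_add[OF \<eta>] hat_carrierD)
  qed
  show "hat_hom PM \<eta> (hat_act H PM pact r p) = hat_act H QM qact r (hat_hom PM \<eta> p)"
    if "r \<in> R_carrier H" "p \<in> carrier (hat_module PM)" for r p
    using that by (simp add: hat_hom_apply P.hat_act_closed hat_act_natural[OF \<eta>])
qed

lemma inj_on_hat_hom: "inj_on (hat_hom PM) (E_hom H PM pact QM qact)"
proof (rule inj_onI)
  fix \<eta> \<eta>'
  assume \<eta>: "\<eta> \<in> E_hom H PM pact QM qact" and \<eta>': "\<eta>' \<in> E_hom H PM pact QM qact"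
    and eq: "hat_hom PM \<eta> = hat_hom PM \<eta>'"
  have "\<eta> x v = \<eta>' x v" for x v
  proof (cases "v \<in> carrier (PM x)")
    case True
    then show ?thesis
      using fun_cong[OF eq, of "hat_incl PM x v"] P.hat_incl_closed
      by (metis hat_hom_apply hat_incl_at)
  next
    case False
    then show ?thesis
      using E_hom_extensional[OF \<eta>] E_hom_extensional[OF \<eta>'] by (metis PiE_arb)
  qed
  then show "\<eta> = \<eta>'"
    by blast
qed

definition E_hom_of :: "(('o \<Rightarrow> 'v) \<Rightarrow> 'o \<Rightarrow> 'w) \<Rightarrow> 'o \<Rightarrow> 'v \<Rightarrow> 'w" where
  "E_hom_of \<psi> = (\<lambda>x. \<lambda>v\<in>carrier (PM x). \<psi> (hat_incl PM x v) x)"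

lemma E_hom_of_E_hom:
  assumes \<psi>: "\<psi> \<in> R_hom H (hat_module PM) (hat_act H PM pact) (hat_module QM) (hat_act H QM qact)"
  shows "E_hom_of \<psi> \<in> E_hom H PM pact QM qact"
proof (rule E_homI)
  have \<psi>_closed: "\<psi> u \<in> hat_carrier QM" if "u \<in> hat_carrier PM" for u
    using R_hom_extensional[OF \<psi>] that by fastforce
  show "E_hom_of \<psi> x \<in> carrier (PM x) \<rightarrow>\<^sub>E carrier (QM x)" for x
    using \<psi>_closed P.hat_incl_closed by (simp add: E_hom_of_def hat_carrierD)
  show "E_hom_of \<psi> x (v \<oplus>\<^bsub>PM x\<^esub> w) = E_hom_of \<psi> x v \<oplus>\<^bsub>QM x\<^esub> E_hom_of \<psi> x w"
    if "v \<in> carrier (PM x)" "w \<in> carrier (PM x)" for x v w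
  proof -
    have "hat_incl PM x (v \<oplus>\<^bsub>PM x\<^esub> w) = hat_incl PM x v \<oplus>\<^bsub>hat_module PM\<^esub> hat_incl PM x w"
      by (auto simp: hat_incl_def hat_module_add)
    then show ?thesis
      using that R_hom_add[OF \<psi>] P.hat_incl_closed by (simp add: E_hom_of_def hat_module_add)
  qed
  show "E_hom_of \<psi> y (pact x y f v) = qact x y f (E_hom_of \<psi> x v)"
    if f: "f \<in> carrier (H x y)" and v: "v \<in> carrier (PM x)" for x y f v
  proof -
    have "hat_incl PM y (pact x y f v) = hat_act H PM pact (R_single x y f) (hat_incl PM x v)"
      using f v by (simp add: P.hat_act_single P.hat_incl_closed)
    then have "\<psi> (hat_incl PM y (pact x y f v)) = hat_act H QM qact (R_single x y f) (\<psi> (hat_incl PM x v))"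
      using R_hom_act[OF \<psi>] f v by (simp add: R_single_closed P.hat_incl_closed)
    then show ?thesis
      using f v \<psi>_closed P.hat_incl_closed
      by (simp add: E_hom_of_def Q.hat_act_single P.pact_closed)
  qed
qed

lemma hat_hom_E_hom_of:
  assumes \<psi>: "\<psi> \<in> R_hom H (hat_module PM) (hat_act H PM pact) (hat_module QM) (hat_act H QM qact)"
  shows "hat_hom PM (E_hom_of \<psi>) = \<psi>"
proof
  fix u
  show "hat_hom PM (E_hom_of \<psi>) u = \<psi> u"
  proof (cases "u \<in> hat_carrier PM")
    case True
    have "\<psi> (hat_incl PM x (u x)) x = \<psi> u x" for x
    proof -
      have "\<psi> (hat_incl PM x (u x)) = \<psi> (hat_act H PM pact (local_unit x) u)"
        using True by (simp add: P.hat_act_local_unit)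
      also have "\<dots> = hat_act H QM qact (local_unit x) (\<psi> u)"
        using R_hom_act[OF \<psi>] True local_unit_closed by simp
      also have "\<dots> = hat_incl QM x (\<psi> u x)"
        using R_hom_extensional[OF \<psi>] True by (fastforce intro: Q.hat_act_local_unit)
      finally show ?thesis
        by simp
    qed
    then show ?thesis
      using True by (simp add: hat_hom_apply E_hom_of_def hat_carrierD)
  next
    case False
    then show ?thesis
      using PiE_arb[OF R_hom_extensional[OF \<psi>]] by (simp add: hat_hom_def)
  qed
qed

lemma bij_betw_hat_hom:
  "bij_betw (hat_hom PM) (E_hom H PM pact QM qact)
    (R_hom H (hat_module PM) (hat_act H PM pact) (hat_module QM) (hat_act H QM qact))"
proof (rule bij_betw_imageI)
  show "inj_on (hat_hom PM) (E_hom H PM pact QM qact)"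
    by (rule inj_on_hat_hom)
  show "hat_hom PM ` E_hom H PM pact QM qact =
      R_hom H (hat_module PM) (hat_act H PM pact) (hat_module QM) (hat_act H QM qact)"
    using hat_hom_R_hom E_hom_of_E_hom hat_hom_E_hom_of by (auto intro!: image_eqI)
qed

end

lemma (in preadditive_category) hat_hom_bij:
  assumes "E_module H cmp idn PM pact" and "E_module H cmp idn QM qact"
  shows "bij_betw (hat_hom PM) (E_hom H PM pact QM qact)
    (R_hom H (hat_module PM) (hat_act H PM pact) (hat_module QM) (hat_act H QM qact))"
proof -
  interpret E_module_pair H cmp idn PM pact QM qact
    by unfold_locales (fact assms)+
  show ?thesis
    by (rule bij_betw_hat_hom)
qed

context left_R_module
begin

lemma act_single_local_unit:
  "f \<in> carrier (H x y) \<Longrightarrow> p \<in> carrier M \<Longrightarrow>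
    act (R_single x y f) (act (local_unit x) p) = act (R_single x y f) p"
  by (simp flip: act_mult add: R_single_closed local_unit_closed R_mult_single_local_unit)

lemma act_local_unit_single:
  "f \<in> carrier (H x y) \<Longrightarrow> p \<in> carrier M \<Longrightarrow>
    act (local_unit b) (act (R_single x y f) p) = (if b = y then act (R_single x y f) p else \<zero>\<^bsub>M\<^esub>)"
  by (simp flip: act_mult add: R_single_closed local_unit_closed R_mult_local_unit_single act_R_zero)

definition component_module :: "'o \<Rightarrow> 'p ring" where
  "component_module x = M\<lparr>carrier := act (local_unit x) ` carrier M\<rparr>"

definition component_act :: "'o \<Rightarrow> 'o \<Rightarrow> 'm \<Rightarrow> 'p \<Rightarrow> 'p" where
  "component_act x y f = act (R_single x y f)"

definition components :: "'p \<Rightarrow> 'o \<Rightarrow> 'p" where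
  "components = (\<lambda>p\<in>carrier M. \<lambda>x. act (local_unit x) p)"

lemma carrier_component_module: "carrier (component_module x) = act (local_unit x) ` carrier M"
  by (simp add: component_module_def)

lemma component_module_simps [simp]:
  "v \<oplus>\<^bsub>component_module x\<^esub> w = v \<oplus>\<^bsub>M\<^esub> w"
  "\<zero>\<^bsub>component_module x\<^esub> = \<zero>\<^bsub>M\<^esub>"
  by (simp_all add: component_module_def)

lemma component_mem_carrier: "v \<in> carrier (component_module x) \<Longrightarrow> v \<in> carrier M"
  using act_closed[OF local_unit_closed] by (auto simp: carrier_component_module)

lemma local_unit_fixes_component:
  assumes "v \<in> carrier (component_module x)"
  shows "act (local_unit x) v = v"
proof -
  obtain p where "p \<in> carrier M" "v = act (local_unit x) p"
    using assms by (auto simp: carrier_component_module)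
  then show ?thesis
    by (simp flip: act_mult add: local_unit_closed local_unit_idem)
qed

lemma act_single_mem_component:
  assumes f: "f \<in> carrier (H x y)" and p: "p \<in> carrier M"
  shows "act (R_single x y f) p \<in> carrier (component_module y)"
proof -
  have "act (R_single x y f) p = act (local_unit y) (act (R_single x y f) p)"
    using f p by (simp add: act_local_unit_single)
  then show ?thesis
    unfolding carrier_component_module
    by (rule image_eqI) (simp add: f p act_closed R_single_closed)
qed

lemma act_component_eq_zero:
  assumes r: "r \<in> R_carrier H" and v: "v \<in> carrier (component_module x)"
    and x: "x \<notin> fst ` R_supp r"
  shows "act r v = \<zero>\<^bsub>M\<^esub>"
proof -
  have "act r v = act (R_mult H cmp r (local_unit x)) v"
    using r v local_unit_fixes_component[OF v] by (simp add: act_mult local_unit_closed component_mem_carrier)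
  then show ?thesis
    using v by (simp add: R_mult_local_unit_eq_zero[OF x] act_R_zero component_mem_carrier)
qed

lemma E_module_components: "E_module H cmp idn component_module component_act"
  unfolding E_module_def
proof (intro conjI allI impI)
  show "abelian_group (component_module x)" for x
    unfolding component_module_def
    by (rule abelian_group_additive_image[OF Mod.abelian_group_axioms])
      (simp_all add: act_closed local_unit_closed act_add_right)
  show "component_act x y f v \<in> carrier (component_module y)"
    if "f \<in> carrier (H x y)" "v \<in> carrier (component_module x)" for x y f v
    using that by (simp add: component_act_def act_single_mem_component component_mem_carrier)
  show "component_act x y f (v \<oplus>\<^bsub>component_module x\<^esub> w) =
      component_act x y f v \<oplus>\<^bsub>component_module y\<^esub> component_act x y f w"
    if "f \<in> carrier (H x y)" "v \<in> carrier (component_module x)" "w \<in> carrier (component_module x)"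
    for x y f v w
    using that by (simp add: component_act_def act_add_right R_single_closed component_mem_carrier)
  show "component_act x y (f \<oplus>\<^bsub>H x y\<^esub> f') v =
      component_act x y f v \<oplus>\<^bsub>component_module y\<^esub> component_act x y f' v"
    if "f \<in> carrier (H x y)" "f' \<in> carrier (H x y)" "v \<in> carrier (component_module x)" for x y f f' v
  proof -
    have "R_single x y (f \<oplus>\<^bsub>H x y\<^esub> f') = R_add H (R_single x y f) (R_single x y f')"
      by (intro ext) (simp add: R_single_def R_add_def)
    then show ?thesis
      using that by (simp add: component_act_def act_add_left R_single_closed component_mem_carrier)
  qed
  show "component_act x x (idn x) v = v" if "v \<in> carrier (component_module x)" for x v
    using local_unit_fixes_component[OF that] by (simp add: component_act_def local_unit_def)
  show "component_act x z (cmp x y z g f) v = component_act y z g (component_act x y f v)"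
    if "f \<in> carrier (H x y)" "g \<in> carrier (H y z)" "v \<in> carrier (component_module x)" for x y z f g v
  proof -
    have "act (R_single y z g) (act (R_single x y f) v) =
        act (R_mult H cmp (R_single y z g) (R_single x y f)) v"
      using that by (simp add: act_mult R_single_closed component_mem_carrier)
    then show ?thesis
      using that by (simp add: component_act_def R_mult_single_single)
  qed
qed

sublocale Cpt: left_E_module H cmp idn component_module component_act
  by unfold_locales (rule E_module_components)

lemma components_apply: "p \<in> carrier M \<Longrightarrow> components p = (\<lambda>x. act (local_unit x) p)"
  by (simp add: components_def)

lemma components_closed: "p \<in> carrier M \<Longrightarrow> components p \<in> hat_carrier component_module"
  by (simp add: components_apply mem_hat_carrier carrier_component_module)

lemma components_add:
  "p \<in> carrier M \<Longrightarrow> q \<in> carrier M \<Longrightarrow>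
    components (p \<oplus>\<^bsub>M\<^esub> q) = components p \<oplus>\<^bsub>hat_module component_module\<^esub> components q"
  by (simp add: components_apply hat_module_add act_add_right local_unit_closed)

lemma components_act:
  assumes r: "r \<in> R_carrier H" and p: "p \<in> carrier M"
  shows "components (act r p) = hat_act H component_module component_act r (components p)"
  using r
proof (induction r rule: R_carrier_induct)
  case (single x y f)
  have "hat_act H component_module component_act (R_single x y f) (components p) =
      hat_incl component_module y (component_act x y f (components p x))"
    using single p by (simp add: Cpt.hat_act_single components_closed)
  also have "\<dots> = hat_incl component_module y (act (R_single x y f) p)"
    using single p by (simp add: components_apply component_act_def act_single_local_unit)
  also have "\<dots> = components (act (R_single x y f) p)"
    using single p
    by (auto simp: components_apply act_closed R_single_closed act_local_unit_single hat_incl_def)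
  finally show ?case
    by (rule sym)
next
  case (add r s)
  have "components (act (R_add H r s) p) =
      components (act r p) \<oplus>\<^bsub>hat_module component_module\<^esub> components (act s p)"
    using add.hyps p by (simp add: act_add_left components_add act_closed)
  then show ?case
    using add p by (simp add: Cpt.hat_act_add_left components_closed)
qed

lemma components_R_hom:
  "components \<in> R_hom H M act (hat_module component_module) (hat_act H component_module component_act)"
proof (rule R_homI)
  show "components \<in> carrier M \<rightarrow>\<^sub>E carrier (hat_module component_module)"
    using components_closed by (simp add: components_def)
  show "components (p \<oplus>\<^bsub>M\<^esub> q) = components p \<oplus>\<^bsub>hat_module component_module\<^esub> components q"
    if "p \<in> carrier M" "q \<in> carrier M" for p q
    using that by (rule components_add)
qed (rule components_act)

text \<open>The map \<open>r \<mapsto> \<Sum>\<^sub>x r u\<^sub>x\<close>. Only sources \<open>x\<close> of \<open>r\<close> contribute, since otherwise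
  \<open>r u\<^sub>x = r e\<^sub>x u\<^sub>x = 0\<close>.\<close>

definition assemble :: "('o \<Rightarrow> 'p) \<Rightarrow> ('o \<Rightarrow> 'o \<Rightarrow> 'm) \<Rightarrow> 'p" where
  "assemble u = (\<lambda>r\<in>R_carrier H. \<Oplus>\<^bsub>M\<^esub>x\<in>fst ` R_supp r. act r (u x))"

lemma assemble_eq_finsum:
  assumes u: "u \<in> hat_carrier component_module" and r: "r \<in> R_carrier H"
    and "finite F" "fst ` R_supp r \<subseteq> F"
  shows "assemble u r = (\<Oplus>\<^bsub>M\<^esub>x\<in>F. act r (u x))"
proof -
  have u_mem: "u x \<in> carrier (component_module x)" for x
    using u by (rule hat_carrierD)
  have "act r (u x) = \<zero>\<^bsub>M\<^esub>" if "x \<notin> fst ` R_supp r" for x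
    using act_component_eq_zero[OF r u_mem that] .
  moreover have "act r (u x) \<in> carrier M" for x
    using act_closed[OF r component_mem_carrier[OF u_mem]] .
  ultimately show ?thesis
    unfolding assemble_def
    using assms by (auto intro!: Mod.add.finprod_mono_neutral_cong_left)
qed

lemma assemble_closed:
  assumes "u \<in> hat_carrier component_module"
  shows "assemble u \<in> R_carrier H \<rightarrow>\<^sub>E carrier M"
  using act_closed component_mem_carrier[OF hat_carrierD[OF assms]]
  by (auto simp: assemble_def intro!: Mod.finsum_closed)

lemma assemble_add:
  assumes u: "u \<in> hat_carrier component_module" and r: "r \<in> R_carrier H" and s: "s \<in> R_carrier H"
  shows "assemble u (R_add H r s) = assemble u r \<oplus>\<^bsub>M\<^esub> assemble u s"
proof -
  let ?F = "fst ` R_supp r \<union> fst ` R_supp s"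
  have "finite ?F"
    using r s finite_R_supp by blast
  moreover have "fst ` R_supp (R_add H r s) \<subseteq> ?F"
    using R_supp_R_add by blast
  ultimately have "assemble u (R_add H r s) = (\<Oplus>\<^bsub>M\<^esub>x\<in>?F. act (R_add H r s) (u x))"
    and "assemble u r = (\<Oplus>\<^bsub>M\<^esub>x\<in>?F. act r (u x))"
    and "assemble u s = (\<Oplus>\<^bsub>M\<^esub>x\<in>?F. act s (u x))"
    using r s u by (auto intro!: assemble_eq_finsum R_add_closed)
  then show ?thesis
    using r s component_mem_carrier[OF hat_carrierD[OF u]]
    by (simp add: act_add_left act_closed flip: Mod.finsum_addf)
qed

lemma assemble_mult:
  assumes u: "u \<in> hat_carrier component_module" and r: "r \<in> R_carrier H" and s: "s \<in> R_carrier H"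
  shows "assemble u (R_mult H cmp r s) = act r (assemble u s)"
proof -
  have uM: "u x \<in> carrier M" for x
    using component_mem_carrier[OF hat_carrierD[OF u]] .
  let ?F = "fst ` R_supp s \<union> fst ` R_supp (R_mult H cmp r s)"
  have F: "finite ?F"
    using r s finite_R_supp R_mult_closed by blast
  have "assemble u (R_mult H cmp r s) = (\<Oplus>\<^bsub>M\<^esub>x\<in>?F. act (R_mult H cmp r s) (u x))"
    using r s u F by (auto intro!: assemble_eq_finsum R_mult_closed)
  also have "\<dots> = (\<Oplus>\<^bsub>M\<^esub>x\<in>?F. act r (act s (u x)))"
    using r s uM by (simp add: act_mult)
  also have "\<dots> = act r (\<Oplus>\<^bsub>M\<^esub>x\<in>?F. act s (u x))"
    using r s uM F by (simp add: act_finsum act_closed Pi_iff)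
  also have "\<dots> = act r (assemble u s)"
    using s u F by (subst assemble_eq_finsum) auto
  finally show ?thesis .
qed

lemma assemble_R_hom:
  "u \<in> hat_carrier component_module \<Longrightarrow> assemble u \<in> R_hom H (R_self H cmp) (R_mult H cmp) M act"
  by (intro R_homI) (simp_all add: assemble_closed assemble_add assemble_mult)

end

locale c_unital_R_module = left_R_module +
  assumes c_unital: "c_unital H cmp M act"
begin

lemma c_unital_eqI:
  assumes p: "p \<in> carrier M" and q: "q \<in> carrier M"
    and act_eq: "\<And>r. r \<in> R_carrier H \<Longrightarrow> act r p = act r q"
  shows "p = q"
proof -
  have "(\<lambda>r\<in>R_carrier H. act r p) = (\<lambda>r\<in>R_carrier H. act r q)"
    using act_eq by (rule restrict_ext)
  then show ?thesis
    using c_unital p q by (auto simp: c_unital_def bij_betw_def dest: inj_onD)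
qed

lemma c_unital_R_homE:
  assumes "\<psi> \<in> R_hom H (R_self H cmp) (R_mult H cmp) M act"
  obtains p where "p \<in> carrier M" "\<psi> = (\<lambda>r\<in>R_carrier H. act r p)"
  using c_unital assms by (auto simp: c_unital_def bij_betw_def)

lemma inj_on_components: "inj_on components (carrier M)"
proof (rule inj_onI)
  fix p q
  assume p: "p \<in> carrier M" and q: "q \<in> carrier M" and eq: "components p = components q"
  show "p = q"
  proof (rule c_unital_eqI[OF p q])
    fix r
    assume "r \<in> R_carrier H"
    then show "act r p = act r q"
    proof (induction r rule: R_carrier_induct)
      case (single x y f)
      have "act (local_unit x) p = act (local_unit x) q"
        using fun_cong[OF eq, of x] p q by (simp add: components_apply)
      then show ?case
        using single p q by (metis act_single_local_unit)
    next
      case (add r s)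
      then show ?case
        using p q by (simp add: act_add_left)
    qed
  qed
qed

lemma components_surj: "hat_carrier component_module \<subseteq> components ` carrier M"
proof
  fix u
  assume u: "u \<in> hat_carrier component_module"
  obtain p where p: "p \<in> carrier M" and assemble_u: "assemble u = (\<lambda>r\<in>R_carrier H. act r p)"
    using c_unital_R_homE[OF assemble_R_hom[OF u]] by blast
  have "act (local_unit x) p = u x" for x
  proof -
    have "act (local_unit x) p = assemble u (local_unit x)"
      using assemble_u local_unit_closed by simp
    also have "\<dots> = (\<Oplus>\<^bsub>M\<^esub>x'\<in>{x}. act (local_unit x) (u x'))"
      using u local_unit_closed
      by (intro assemble_eq_finsum) (auto simp: R_supp_def local_unit_def R_single_def)
    also have "\<dots> = u x"
      using hat_carrierD[OF u, of x]
      by (simp add: local_unit_fixes_component act_closed local_unit_closed component_mem_carrier)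
    finally show ?thesis .
  qed
  then have "components p = u"
    using p by (simp add: components_apply fun_eq_iff)
  then show "u \<in> components ` carrier M"
    using p by blast
qed

lemma bij_betw_components: "bij_betw components (carrier M) (hat_carrier component_module)"
  unfolding bij_betw_def using inj_on_components components_surj components_closed by blast

end

lemma (in preadditive_category) c_unital_R_module_iso_hat_module:
  fixes M :: "'p ring"
  assumes "R_module H cmp M act" and "c_unital H cmp M act"
  shows "\<exists>(PM :: 'o \<Rightarrow> 'p ring) pact \<phi>. E_module H cmp idn PM pact \<and>
    \<phi> \<in> R_hom H M act (hat_module PM) (hat_act H PM pact) \<and> bij_betw \<phi> (carrier M) (hat_carrier PM)"
proof -
  interpret c_unital_R_module H cmp idn M act
    by unfold_locales (fact assms)+
  show ?thesis
    using E_module_components components_R_hom bij_betw_components by blast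
qed

theorem proposition6p6:
  fixes H :: "'o \<Rightarrow> 'o \<Rightarrow> 'm ring"
    and cmp :: "'o \<Rightarrow> 'o \<Rightarrow> 'o \<Rightarrow> 'm \<Rightarrow> 'm \<Rightarrow> 'm"
    and idn :: "'o \<Rightarrow> 'm"
  assumes "preadditive_cat H cmp idn"
  shows
    "(\<forall>(PM :: 'o \<Rightarrow> 'v ring) pact. E_module H cmp idn PM pact \<longrightarrow>
        R_module H cmp (hat_module PM) (hat_act H PM pact) \<and>
        c_unital H cmp (hat_module PM) (hat_act H PM pact)) \<and>
     (\<forall>(PM :: 'o \<Rightarrow> 'v ring) pact (QM :: 'o \<Rightarrow> 'w ring) qact.
        E_module H cmp idn PM pact \<longrightarrow> E_module H cmp idn QM qact \<longrightarrow>
        bij_betw (hat_hom PM) (E_hom H PM pact QM qact)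
          (R_hom H (hat_module PM) (hat_act H PM pact) (hat_module QM) (hat_act H QM qact))) \<and>
     (\<forall>(M :: 'p ring) act. R_module H cmp M act \<and> c_unital H cmp M act \<longrightarrow>
        (\<exists>(PM :: 'o \<Rightarrow> 'p ring) pact \<phi>. E_module H cmp idn PM pact \<and>
           \<phi> \<in> R_hom H M act (hat_module PM) (hat_act H PM pact) \<and>
           bij_betw \<phi> (carrier M) (hat_carrier PM)))"
proof -
  interpret preadditive_category H cmp idn
    by unfold_locales (fact assms)
  show ?thesis
    using hat_module_c_unital_R_module hat_hom_bij c_unital_R_module_iso_hat_module by blast
qed

end
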